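(* Fix $k\in\mathbb N$ and $a_1,\dots,a_k>0$. Then, as $N\to\infty$, $$N^{2/k}\Big[\min_{j=1}^N\Big(\sum_{i=1}^k a_i(\sqrt N\gamma_{ij})^2\Big)-\min_{j=1}^N\Big(\sum_{i=1}^k a_iy_{ij}^2\Big)\Big]\to0\quad\text{in probability}.$$
   Context: Let $\mathbf{y}_1,\dots,\mathbf{y}_N$ be i.i.d. $\mathcal N(0,\mathrm{Id}_N)$ vectors in $\mathbb R^N$, $y_{ij}$ the $j$-th entry of $\mathbf y_i$. Gram–Schmidt: $\mathbf w_1=\mathbf y_1$, $\mathbf w_i=\mathbf y_i-\sum_{j<i}\frac{\langle\mathbf y_i,\mathbf w_j\rangle}{\|\mathbf w_j\|^2}\mathbf w_j$, $\boldsymbol\gamma_i=\mathbf w_i/\|\mathbf w_i\|$, with $\gamma_{ij}$ the $j$-th entry of $\boldsymbol\gamma_i$. *)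

theory Defs
  imports "HOL-Probability.Probability"
begin

text \<open>Vectors in R^N are functions nat => real, entries indexed by 1..N.\<close>

definition ipN :: "nat \<Rightarrow> (nat \<Rightarrow> real) \<Rightarrow> (nat \<Rightarrow> real) \<Rightarrow> real" where
  "ipN N u v = (\<Sum>l=1..N. u l * v l)"

primrec gs_ws :: "nat \<Rightarrow> (nat \<Rightarrow> nat \<Rightarrow> real) \<Rightarrow> nat \<Rightarrow> (nat \<Rightarrow> real) list" where
  "gs_ws N y 0 = []"
| "gs_ws N y (Suc n) =
     (let ws = gs_ws N y n
      in ws @ [(\<lambda>l. y (Suc n) l - (\<Sum>w\<leftarrow>ws. ipN N (y (Suc n)) w / ipN N w w * w l))])"

definition gs_w :: "nat \<Rightarrow> (nat \<Rightarrow> nat \<Rightarrow> real) \<Rightarrow> nat \<Rightarrow> nat \<Rightarrow> real" where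
  "gs_w N y i = gs_ws N y i ! (i - 1)"

definition gs_gamma :: "nat \<Rightarrow> (nat \<Rightarrow> nat \<Rightarrow> real) \<Rightarrow> nat \<Rightarrow> nat \<Rightarrow> real" where
  "gs_gamma N y i j = gs_w N y i j / sqrt (ipN N (gs_w N y i) (gs_w N y i))"

text \<open>Probability space for N i.i.d. N(0, Id_N) vectors: entries omega (i,j) = y_{ij},
  1 <= i,j <= N, i.i.d. standard Gaussians.\<close>
definition gauss_space :: "nat \<Rightarrow> (nat \<times> nat \<Rightarrow> real) measure" where
  "gauss_space N = PiM ({1..N} \<times> {1..N}) (\<lambda>_. density lborel std_normal_density)"

definition yvecs :: "(nat \<times> nat \<Rightarrow> real) \<Rightarrow> nat \<Rightarrow> nat \<Rightarrow> real" where
  "yvecs \<omega> i j = \<omega> (i, j)"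

definition lemma3p10_stat :: "nat \<Rightarrow> (nat \<Rightarrow> real) \<Rightarrow> nat \<Rightarrow> (nat \<times> nat \<Rightarrow> real) \<Rightarrow> real" where
  "lemma3p10_stat k a N \<omega> =
     real N powr (2 / real k) *
       (Min ((\<lambda>j. \<Sum>i=1..k. a i * (sqrt (real N) * gs_gamma N (yvecs \<omega>) i j)^2) ` {1..N})
      - Min ((\<lambda>j. \<Sum>i=1..k. a i * (yvecs \<omega> i j)^2) ` {1..N}))"

end

theory Submission
  imports Defs
begin

text \<open>
  Suppose the Gram matrix of y_1, ..., y_k is entrywise within eta N of N Id.  Then the
  projection coefficients in the Gram-Schmidt recursion are O(eta), and induction on i shows
  that w_i moves away from y_i by at most delta times sum (p < i) |y_p| coordinatewise,
  with delta -> 0 as eta -> 0; in particular |w_i|^2 = N (1 + o(1)).  Hence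
  sqrt N gamma_ij = y_ij + o(1) sum (r <= k) |y_rj|, every column form
  sum (i <= k) a_i (sqrt N gamma_ij)^2 is (1 + o(1)) times sum (i <= k) a_i y_ij^2, and the
  two minima over j differ by o(1) times the second minimum.

  Chebyshev's inequality makes the Gram condition hold with probability -> 1.  The factor
  N^(2/k) is compensated because N^(2/k) min_j sum (i <= k) a_i y_ij^2 is bounded in
  probability: the number of columns j with all |y_ij| <= tau N^(-1/k) has mean about
  (2 tau phi(1))^k and, by a second moment bound, is positive with high probability.
\<close>

section \<open>Gram-Schmidt applied to almost orthogonal vectors\<close>

lemma gs_ws_eq_map: "gs_ws N y n = map (gs_w N y) [1..<Suc n]"
proof (induction n)
  case 0
  then show ?case by simp
next
  case (Suc n)
  then have "length (gs_ws N y n) = n" by simp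
  then have "gs_w N y (Suc n) =
      (\<lambda>l. y (Suc n) l - (\<Sum>w\<leftarrow>gs_ws N y n. ipN N (y (Suc n)) w / ipN N w w * w l))"
    by (simp add: gs_w_def Let_def nth_append)
  with Suc show ?case by (simp add: Let_def)
qed

lemma gs_w_Suc:
  "gs_w N y (Suc n) l = y (Suc n) l -
     (\<Sum>m=1..n. ipN N (y (Suc n)) (gs_w N y m) / ipN N (gs_w N y m) (gs_w N y m) * gs_w N y m l)"
proof -
  have "length (gs_ws N y n) = n" by (simp add: gs_ws_eq_map)
  then have "gs_w N y (Suc n) l =
      y (Suc n) l - (\<Sum>w\<leftarrow>gs_ws N y n. ipN N (y (Suc n)) w / ipN N w w * w l)"
    by (simp add: gs_w_def Let_def nth_append)
  then show ?thesis
    by (simp del: upt_Suc add: gs_ws_eq_map o_def interv_sum_list_conv_sum_set_nat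
        atLeastLessThanSuc_atLeastAtMost)
qed

definition gram_near_scaled_id :: "nat \<Rightarrow> real \<Rightarrow> nat \<Rightarrow> (nat \<Rightarrow> nat \<Rightarrow> real) \<Rightarrow> bool" where
  "gram_near_scaled_id k \<eta> N y \<longleftrightarrow>
     (\<forall>i\<in>{1..k}. \<forall>l\<in>{1..k}. \<bar>ipN N (y i) (y l) - (if i = l then real N else 0)\<bar> \<le> \<eta> * N)"

definition gs_near_input :: "nat \<Rightarrow> real \<Rightarrow> nat \<Rightarrow> (nat \<Rightarrow> nat \<Rightarrow> real) \<Rightarrow> bool" where
  "gs_near_input n \<delta> N y \<longleftrightarrow>
     (\<forall>m\<in>{1..n}. \<forall>j. \<bar>gs_w N y m j - y m j\<bar> \<le> \<delta> * (\<Sum>p\<in>{1..<m}. \<bar>y p j\<bar>))"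

lemma gram_near_scaled_id_mono:
  "gram_near_scaled_id k \<eta> N y \<Longrightarrow> \<eta> \<le> \<eta>' \<Longrightarrow> gram_near_scaled_id k \<eta>' N y"
  unfolding gram_near_scaled_id_def by (meson mult_right_mono of_nat_0_le_iff order_trans)

lemma gram_near_scaled_idD:
  assumes "gram_near_scaled_id k \<eta> N y" "i \<in> {1..k}" "l \<in> {1..k}"
  shows "\<bar>ipN N (y i) (y i) - N\<bar> \<le> \<eta> * N"
    and "i \<noteq> l \<Longrightarrow> \<bar>ipN N (y i) (y l)\<bar> \<le> \<eta> * N"
  using assms unfolding gram_near_scaled_id_def by force+

lemma gram_near_sum_abs_mult_le:
  assumes near: "gram_near_scaled_id k \<eta> N y" and "\<eta> \<le> 1" and p: "p \<in> {1..k}" and r: "r \<in> {1..k}"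
  shows "(\<Sum>j=1..N. \<bar>y p j\<bar> * \<bar>y r j\<bar>) \<le> 2 * N"
proof -
  have "(\<Sum>j=1..N. \<bar>y p j\<bar> * \<bar>y r j\<bar>) \<le> (\<Sum>j=1..N. (y p j * y p j + y r j * y r j) / 2)"
  proof (rule sum_mono)
    fix j
    have "0 \<le> (\<bar>y p j\<bar> - \<bar>y r j\<bar>)\<^sup>2" by simp
    then show "\<bar>y p j\<bar> * \<bar>y r j\<bar> \<le> (y p j * y p j + y r j * y r j) / 2"
      by (simp add: power2_eq_square algebra_simps abs_mult_self_eq)
  qed
  also have "\<dots> = (ipN N (y p) (y p) + ipN N (y r) (y r)) / 2"
    unfolding ipN_def by (simp only: sum.distrib[symmetric] sum_divide_distrib)
  also have "\<dots> \<le> ((1 + \<eta>) * N + (1 + \<eta>) * N) / 2"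
    using gram_near_scaled_idD(1)[OF near p p] gram_near_scaled_idD(1)[OF near r r]
    by (simp add: algebra_simps abs_le_iff)
  also have "\<dots> \<le> 2 * N"
    using mult_right_mono[OF \<open>\<eta> \<le> 1\<close>, of "real N"] by (simp add: algebra_simps)
  finally show ?thesis .
qed

lemma gs_near_input_mono:
  assumes "gs_near_input n \<delta> N y" "\<delta> \<le> \<delta>'"
  shows "gs_near_input n \<delta>' N y"
  unfolding gs_near_input_def
proof (intro ballI allI)
  fix m j assume "m \<in> {1..n}"
  then have "\<bar>gs_w N y m j - y m j\<bar> \<le> \<delta> * (\<Sum>p\<in>{1..<m}. \<bar>y p j\<bar>)"
    using assms(1) unfolding gs_near_input_def by blast
  also have "\<dots> \<le> \<delta>' * (\<Sum>p\<in>{1..<m}. \<bar>y p j\<bar>)"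
    using assms(2) by (intro mult_right_mono sum_nonneg) auto
  finally show "\<bar>gs_w N y m j - y m j\<bar> \<le> \<delta>' * (\<Sum>p\<in>{1..<m}. \<bar>y p j\<bar>)" .
qed

lemma gs_near_input_Suc:
  assumes "gs_near_input n \<delta> N y"
    and "\<And>j. \<bar>gs_w N y (Suc n) j - y (Suc n) j\<bar> \<le> \<delta> * (\<Sum>p\<in>{1..n}. \<bar>y p j\<bar>)"
  shows "gs_near_input (Suc n) \<delta> N y"
  using assms unfolding gs_near_input_def
  by (metis atLeastAtMost_iff atLeastLessThanSuc_atLeastAtMost le_Suc_eq)

lemma abs_le_sum_abs_of_near:
  fixes u :: "nat \<Rightarrow> real"
  assumes "\<bar>w - u m\<bar> \<le> \<delta> * (\<Sum>r\<in>{1..<m}. \<bar>u r\<bar>)" "0 \<le> \<delta>" "\<delta> \<le> 1" "1 \<le> m" "m \<le> n"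
  shows "\<bar>w\<bar> \<le> (\<Sum>r\<in>{1..n}. \<bar>u r\<bar>)"
proof -
  have "\<delta> * (\<Sum>r\<in>{1..<m}. \<bar>u r\<bar>) \<le> (\<Sum>r\<in>{1..<m}. \<bar>u r\<bar>)"
    using assms(2,3) by (intro mult_left_le_one_le sum_nonneg) auto
  then have "\<bar>w\<bar> \<le> \<bar>u m\<bar> + (\<Sum>r\<in>{1..<m}. \<bar>u r\<bar>)" using assms(1) by linarith
  also have "\<dots> = (\<Sum>r\<in>{1..m}. \<bar>u r\<bar>)"
    using \<open>1 \<le> m\<close> by (simp add: atLeastLessThanSuc_atLeastAtMost[symmetric] sum.atLeastLessThan_Suc)
  also have "\<dots> \<le> (\<Sum>r\<in>{1..n}. \<bar>u r\<bar>)" using assms by (intro sum_mono2) auto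
  finally show ?thesis .
qed

lemma ipN_near_input_diff_le:
  assumes near: "gram_near_scaled_id k \<eta> N y" and "\<eta> \<le> 1" and p: "p \<in> {1..k}" and m: "m \<in> {1..k}"
    and "0 \<le> \<delta>" and w: "\<And>j. \<bar>w j - y m j\<bar> \<le> \<delta> * (\<Sum>r\<in>{1..<m}. \<bar>y r j\<bar>)"
  shows "\<bar>ipN N (y p) w - ipN N (y p) (y m)\<bar> \<le> 2 * real k * \<delta> * N"
proof -
  have "\<bar>ipN N (y p) w - ipN N (y p) (y m)\<bar> = \<bar>\<Sum>j=1..N. y p j * (w j - y m j)\<bar>"
    by (simp add: ipN_def sum_subtractf right_diff_distrib)
  also have "\<dots> \<le> (\<Sum>j=1..N. \<bar>y p j\<bar> * (\<delta> * (\<Sum>r\<in>{1..<m}. \<bar>y r j\<bar>)))"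
  proof (rule order_trans[OF sum_abs sum_mono])
    fix j
    show "\<bar>y p j * (w j - y m j)\<bar> \<le> \<bar>y p j\<bar> * (\<delta> * (\<Sum>r\<in>{1..<m}. \<bar>y r j\<bar>))"
      unfolding abs_mult by (rule mult_left_mono[OF w abs_ge_zero])
  qed
  also have "\<dots> = \<delta> * (\<Sum>r\<in>{1..<m}. \<Sum>j=1..N. \<bar>y p j\<bar> * \<bar>y r j\<bar>)"
    by (simp add: sum_distrib_left mult.left_commute, rule sum.swap)
  also have "\<dots> \<le> \<delta> * (\<Sum>r\<in>{1..<m}. 2 * real N)"
    using m \<open>0 \<le> \<delta>\<close> gram_near_sum_abs_mult_le[OF near \<open>\<eta> \<le> 1\<close> p]
    by (intro mult_left_mono sum_mono) auto
  also have "\<dots> \<le> \<delta> * (2 * k * N)"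
    using m \<open>0 \<le> \<delta>\<close> by (intro mult_left_mono) (auto intro: mult_right_mono)
  finally show ?thesis by (simp add: algebra_simps)
qed

lemma sum_sq_near_input_le:
  fixes \<delta> :: real
  assumes near: "gram_near_scaled_id k \<eta> N y" and "\<eta> \<le> 1" and i: "i \<in> {1..k}"
    and w: "\<And>j. \<bar>w j - y i j\<bar> \<le> \<delta> * (\<Sum>r\<in>{1..<i}. \<bar>y r j\<bar>)"
  shows "(\<Sum>j=1..N. (w j - y i j)\<^sup>2) \<le> 2 * (real k)\<^sup>2 * \<delta>\<^sup>2 * N"
proof -
  have "(\<Sum>j=1..N. (w j - y i j)\<^sup>2) \<le> (\<Sum>j=1..N. (\<delta> * (\<Sum>r\<in>{1..<i}. \<bar>y r j\<bar>))\<^sup>2)"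
    by (intro sum_mono) (metis power2_abs power_mono abs_ge_zero w)
  also have "\<dots> = (\<Sum>j=1..N. \<delta>\<^sup>2 * (\<Sum>r\<in>{1..<i}. \<Sum>r'\<in>{1..<i}. \<bar>y r j\<bar> * \<bar>y r' j\<bar>))"
    by (simp only: power_mult_distrib) (simp add: power2_eq_square sum_product)
  also have "\<dots> = \<delta>\<^sup>2 * (\<Sum>r\<in>{1..<i}. \<Sum>r'\<in>{1..<i}. \<Sum>j=1..N. \<bar>y r j\<bar> * \<bar>y r' j\<bar>)"
    by (simp only: sum_distrib_left sum.swap[where A = "{1..N}"])
  also have "\<dots> \<le> \<delta>\<^sup>2 * (\<Sum>r\<in>{1..<i}. \<Sum>r'\<in>{1..<i}. 2 * real N)"
    using i gram_near_sum_abs_mult_le[OF near \<open>\<eta> \<le> 1\<close>]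
    by (intro mult_left_mono sum_mono) auto
  also have "\<dots> = \<delta>\<^sup>2 * ((real (i - 1))\<^sup>2 * (2 * N))"
    using i by (simp add: power2_eq_square of_nat_diff)
  also have "\<dots> \<le> \<delta>\<^sup>2 * ((real k)\<^sup>2 * (2 * N))"
    using i by (intro mult_left_mono mult_right_mono power_mono) auto
  finally show ?thesis by (simp add: algebra_simps)
qed

lemma gs_w_sq_norm_near:
  assumes near: "gram_near_scaled_id k \<eta> N y" and "\<eta> \<le> 1" and gs: "gs_near_input n \<delta> N y"
    and "0 \<le> \<delta>" "n \<le> k" and i: "i \<in> {1..n}"
  shows "\<bar>ipN N (gs_w N y i) (gs_w N y i) - N\<bar> \<le> (\<eta> + 4 * real k * \<delta> + 2 * (real k)\<^sup>2 * \<delta>\<^sup>2) * N"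
proof -
  define w where "w = gs_w N y i"
  have ik: "i \<in> {1..k}" using i \<open>n \<le> k\<close> by auto
  have w: "\<bar>w j - y i j\<bar> \<le> \<delta> * (\<Sum>r\<in>{1..<i}. \<bar>y r j\<bar>)" for j
    using gs i unfolding gs_near_input_def w_def by blast
  have "ipN N w w = ipN N (y i) (y i) + 2 * (ipN N (y i) w - ipN N (y i) (y i))
      + (\<Sum>j=1..N. (w j - y i j)\<^sup>2)"
    by (simp add: ipN_def power2_eq_square algebra_simps sum.distrib sum_subtractf sum_distrib_left)
  moreover have "\<bar>ipN N (y i) (y i) - N\<bar> \<le> \<eta> * N"
    using gram_near_scaled_idD(1)[OF near ik ik] .
  moreover have "\<bar>ipN N (y i) w - ipN N (y i) (y i)\<bar> \<le> 2 * real k * \<delta> * N"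
    using ipN_near_input_diff_le[OF near \<open>\<eta> \<le> 1\<close> ik ik \<open>0 \<le> \<delta>\<close> w] .
  moreover have "0 \<le> (\<Sum>j=1..N. (w j - y i j)\<^sup>2)" by (intro sum_nonneg) auto
  moreover have "(\<Sum>j=1..N. (w j - y i j)\<^sup>2) \<le> 2 * (real k)\<^sup>2 * \<delta>\<^sup>2 * N"
    using sum_sq_near_input_le[OF near \<open>\<eta> \<le> 1\<close> ik w] .
  ultimately have "\<bar>ipN N w w - N\<bar> \<le> \<eta> * N + 2 * (2 * real k * \<delta> * N) + 2 * (real k)\<^sup>2 * \<delta>\<^sup>2 * N"
    by (simp add: abs_le_iff)
  then show ?thesis unfolding w_def by (simp add: algebra_simps)
qed

lemma gs_coeff_abs_le:
  assumes near: "gram_near_scaled_id k \<eta> N y" and "\<eta> \<le> 1/4" and gs: "gs_near_input n \<delta> N y"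
    and "0 \<le> \<delta>" "real k * \<delta> \<le> 1/32" "Suc n \<le> k" and m: "m \<in> {1..n}" and "1 \<le> N"
  shows "\<bar>ipN N (y (Suc n)) (gs_w N y m) / ipN N (gs_w N y m) (gs_w N y m)\<bar> \<le> 2 * (\<eta> + 2 * real k * \<delta>)"
proof -
  have mk: "m \<in> {1..k}" and nk: "Suc n \<in> {1..k}" using m \<open>Suc n \<le> k\<close> by auto
  have "\<delta> \<le> real k * \<delta>" using mk \<open>0 \<le> \<delta>\<close> by (simp add: mult_le_cancel_right1)
  then have "\<delta> \<le> 1" using \<open>real k * \<delta> \<le> 1/32\<close> by linarith
  have w: "\<bar>gs_w N y m j - y m j\<bar> \<le> \<delta> * (\<Sum>r\<in>{1..<m}. \<bar>y r j\<bar>)" for j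
    using gs m unfolding gs_near_input_def by blast
  have "(real k * \<delta>)\<^sup>2 \<le> (1/32)\<^sup>2"
    using \<open>real k * \<delta> \<le> 1/32\<close> \<open>0 \<le> \<delta>\<close> by (intro power_mono) auto
  then have "(real k)\<^sup>2 * \<delta>\<^sup>2 \<le> 1/1024"
    by (simp add: power_mult_distrib power_divide)
  then have "\<eta> + 4 * real k * \<delta> + 2 * (real k)\<^sup>2 * \<delta>\<^sup>2 \<le> 1/2"
    using \<open>\<eta> \<le> 1/4\<close> \<open>real k * \<delta> \<le> 1/32\<close> by simp
  then have "(\<eta> + 4 * real k * \<delta> + 2 * (real k)\<^sup>2 * \<delta>\<^sup>2) * N \<le> N / 2"
    using mult_right_mono[of _ "1/2" "real N"] by simp
  moreover have "\<bar>ipN N (gs_w N y m) (gs_w N y m) - N\<bar> \<le> (\<eta> + 4 * real k * \<delta> + 2 * (real k)\<^sup>2 * \<delta>\<^sup>2) * N"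
    using gs_w_sq_norm_near[OF near _ gs \<open>0 \<le> \<delta>\<close> _ m] \<open>\<eta> \<le> 1/4\<close> \<open>Suc n \<le> k\<close> by simp
  ultimately have W: "N / 2 \<le> ipN N (gs_w N y m) (gs_w N y m)"
    by linarith
  have "\<bar>ipN N (y (Suc n)) (gs_w N y m)\<bar> \<le> \<bar>ipN N (y (Suc n)) (y m)\<bar> + 2 * real k * \<delta> * N"
    using ipN_near_input_diff_le[OF near _ nk mk \<open>0 \<le> \<delta>\<close> w] \<open>\<eta> \<le> 1/4\<close> by linarith
  also have "\<dots> \<le> (\<eta> + 2 * real k * \<delta>) * N"
    using gram_near_scaled_idD(2)[OF near nk mk] m by (auto simp: algebra_simps)
  finally have "\<bar>ipN N (y (Suc n)) (gs_w N y m)\<bar> / ipN N (gs_w N y m) (gs_w N y m)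
      \<le> (\<eta> + 2 * real k * \<delta>) * N / (N / 2)"
    using W \<open>1 \<le> N\<close> by (intro frac_le) auto
  then show ?thesis
    using W \<open>1 \<le> N\<close> by (simp add: abs_divide)
qed

lemma gs_w_Suc_near:
  assumes near: "gram_near_scaled_id k \<eta> N y" and "\<eta> \<le> 1/4" and gs: "gs_near_input n \<delta> N y"
    and "0 \<le> \<delta>" "real k * \<delta> \<le> 1/32" "Suc n \<le> k" "1 \<le> N"
  shows "\<bar>gs_w N y (Suc n) j - y (Suc n) j\<bar> \<le> 2 * real n * (\<eta> + 2 * real k * \<delta>) * (\<Sum>p\<in>{1..n}. \<bar>y p j\<bar>)"
proof -
  define c where "c m = ipN N (y (Suc n)) (gs_w N y m) / ipN N (gs_w N y m) (gs_w N y m)" for m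
  define T where "T = (\<Sum>p\<in>{1..n}. \<bar>y p j\<bar>)"
  have "\<delta> \<le> real k * \<delta>" using \<open>Suc n \<le> k\<close> \<open>0 \<le> \<delta>\<close> by (simp add: mult_le_cancel_right1)
  then have "\<delta> \<le> 1" using \<open>real k * \<delta> \<le> 1/32\<close> by linarith
  have wT: "\<bar>gs_w N y m j\<bar> \<le> T" if "m \<in> {1..n}" for m
    using gs that \<open>0 \<le> \<delta>\<close> \<open>\<delta> \<le> 1\<close> unfolding gs_near_input_def T_def
    by (intro abs_le_sum_abs_of_near) auto
  have "\<bar>gs_w N y (Suc n) j - y (Suc n) j\<bar> = \<bar>\<Sum>m=1..n. c m * gs_w N y m j\<bar>"
    by (simp add: gs_w_Suc c_def)
  also have "\<dots> \<le> (\<Sum>m=1..n. \<bar>c m * gs_w N y m j\<bar>)"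
    by (rule sum_abs)
  also have "\<dots> \<le> (\<Sum>m=1..n. 2 * (\<eta> + 2 * real k * \<delta>) * T)"
  proof (rule sum_mono)
    fix m assume m: "m \<in> {1..n}"
    have c: "\<bar>c m\<bar> \<le> 2 * (\<eta> + 2 * real k * \<delta>)"
      unfolding c_def by (rule gs_coeff_abs_le[OF assms(1-6) m assms(7)])
    show "\<bar>c m * gs_w N y m j\<bar> \<le> 2 * (\<eta> + 2 * real k * \<delta>) * T"
      unfolding abs_mult using c wT[OF m] order_trans[OF abs_ge_zero c] by (intro mult_mono) auto
  qed
  also have "\<dots> = 2 * real n * (\<eta> + 2 * real k * \<delta>) * T"
    by (simp add: mult_ac)
  finally show ?thesis unfolding T_def .
qed

lemma gs_near_input_Suc_of_gram_near:
  assumes near: "gram_near_scaled_id k \<eta> N y" and gs: "gs_near_input n \<delta>' N y"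
    and "Suc n \<le> k" "1 \<le> N" "0 \<le> \<eta>" "\<eta> \<le> 1/4" "0 \<le> \<delta>'" "real k * \<delta>' \<le> 1/32"
    and \<delta>: "2 * real k * (\<eta> + 2 * real k * \<delta>') \<le> \<delta>"
  shows "gs_near_input (Suc n) \<delta> N y"
proof (rule gs_near_input_Suc)
  have "1 \<le> real k" using \<open>Suc n \<le> k\<close> by simp
  then have "1 \<le> 2 * real k * (2 * real k)"
    using mult_mono[of 1 "2 * real k" 1 "2 * real k"] by simp
  then have "\<delta>' \<le> 2 * real k * (2 * real k) * \<delta>'"
    using \<open>0 \<le> \<delta>'\<close> by (simp add: mult_le_cancel_right1)
  also have "\<dots> \<le> 2 * real k * (\<eta> + 2 * real k * \<delta>')"
    using \<open>0 \<le> \<eta>\<close> \<open>1 \<le> real k\<close> by (simp add: mult.assoc mult_left_mono)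
  also have "\<dots> \<le> \<delta>" by (rule \<delta>)
  finally show "gs_near_input n \<delta> N y" by (rule gs_near_input_mono[OF gs])
  have "2 * real n * (\<eta> + 2 * real k * \<delta>') \<le> 2 * real k * (\<eta> + 2 * real k * \<delta>')"
    using \<open>Suc n \<le> k\<close> \<open>0 \<le> \<eta>\<close> \<open>0 \<le> \<delta>'\<close> by (intro mult_right_mono) auto
  then have "2 * real n * (\<eta> + 2 * real k * \<delta>') \<le> \<delta>" using \<delta> by linarith
  then show "\<bar>gs_w N y (Suc n) j - y (Suc n) j\<bar> \<le> \<delta> * (\<Sum>p\<in>{1..n}. \<bar>y p j\<bar>)" for j
    using gs_w_Suc_near[OF near \<open>\<eta> \<le> 1/4\<close> gs \<open>0 \<le> \<delta>'\<close> \<open>real k * \<delta>' \<le> 1/32\<close> \<open>Suc n \<le> k\<close> \<open>1 \<le> N\<close>]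
    by (meson mult_right_mono order_trans sum_nonneg abs_ge_zero)
qed

lemma gs_near_input_of_gram_near:
  assumes "n \<le> k" "0 < \<delta>"
  shows "\<exists>\<eta>>0. \<forall>N y. 1 \<le> N \<longrightarrow> gram_near_scaled_id k \<eta> N y \<longrightarrow> gs_near_input n \<delta> N y"
  using assms
proof (induction n arbitrary: \<delta>)
  case 0
  then show ?case by (auto simp: gs_near_input_def intro: exI[of _ 1])
next
  case (Suc n)
  then have k: "1 \<le> real k" by simp
  define \<delta>' where "\<delta>' = min (1 / (32 * k)) (\<delta> / (8 * (real k)\<^sup>2))"
  have "0 < \<delta>'" using Suc.prems k by (simp add: \<delta>'_def)
  have "real k * \<delta>' \<le> 1/32" "4 * (real k)\<^sup>2 * \<delta>' \<le> \<delta> / 2"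
    using k by (auto simp: \<delta>'_def field_simps min_def)
  obtain \<eta>' where "0 < \<eta>'"
    and IH: "\<forall>N y. 1 \<le> N \<longrightarrow> gram_near_scaled_id k \<eta>' N y \<longrightarrow> gs_near_input n \<delta>' N y"
    using Suc.IH[of \<delta>'] Suc.prems \<open>0 < \<delta>'\<close> by auto
  define \<eta> where "\<eta> = min \<eta>' (min (1/4) (\<delta> / (4 * k)))"
  have "0 < \<eta>" "\<eta> \<le> \<eta>'" "\<eta> \<le> 1/4" "\<eta> \<le> \<delta> / (4 * k)"
    using \<open>0 < \<eta>'\<close> Suc.prems k by (auto simp: \<eta>_def)
  then have "2 * real k * \<eta> \<le> \<delta> / 2" using k by (simp add: field_simps)
  then have "2 * real k * (\<eta> + 2 * real k * \<delta>') \<le> \<delta>"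
    using \<open>4 * (real k)\<^sup>2 * \<delta>' \<le> \<delta> / 2\<close> by (simp add: algebra_simps power2_eq_square)
  then have "gs_near_input (Suc n) \<delta> N y" if "1 \<le> N" "gram_near_scaled_id k \<eta> N y" for N y
    using IH that gram_near_scaled_id_mono[OF that(2) \<open>\<eta> \<le> \<eta>'\<close>] Suc.prems \<open>0 < \<eta>\<close> \<open>0 < \<delta>'\<close>
      \<open>\<eta> \<le> 1/4\<close> \<open>real k * \<delta>' \<le> 1/32\<close>
    by (intro gs_near_input_Suc_of_gram_near[of k \<eta> N y n \<delta>']) auto
  with \<open>0 < \<eta>\<close> show ?case by blast
qed

lemma abs_sqrt_minus_one_le: "0 \<le> x \<Longrightarrow> \<bar>sqrt x - 1\<bar> \<le> \<bar>x - 1\<bar>"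
proof -
  assume "0 \<le> x"
  then have "x - 1 = (sqrt x - 1) * (sqrt x + 1)" by (simp add: algebra_simps)
  then have "\<bar>x - 1\<bar> = \<bar>sqrt x - 1\<bar> * (sqrt x + 1)" using \<open>0 \<le> x\<close> by (simp add: abs_mult)
  also have "\<dots> \<ge> \<bar>sqrt x - 1\<bar>" using \<open>0 \<le> x\<close> by (simp add: mult_le_cancel_left1)
  finally show ?thesis .
qed

lemma sqrt_N_gs_gamma_bound:
  assumes gs: "gs_near_input k \<delta> N y" and "0 \<le> \<delta>" "\<delta> \<le> 1" and i: "i \<in> {1..k}"
    and W: "\<bar>ipN N (gs_w N y i) (gs_w N y i) - N\<bar> \<le> \<rho> * N" and "0 \<le> \<rho>" "\<rho> \<le> 1/4" "1 \<le> N"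
  shows "\<bar>sqrt N * gs_gamma N y i j - y i j\<bar> \<le> (2 * \<rho> + \<delta>) * (\<Sum>r\<in>{1..k}. \<bar>y r j\<bar>)"
proof -
  define w where "w = gs_w N y i"
  define U where "U = (\<Sum>r\<in>{1..k}. \<bar>y r j\<bar>)"
  define \<nu> where "\<nu> = sqrt (N / ipN N w w)"
  have WN: "3 * N / 4 \<le> ipN N w w"
    using W mult_right_mono[OF \<open>\<rho> \<le> 1/4\<close>, of "real N"] unfolding w_def by (simp add: abs_le_iff)
  have "\<bar>\<nu> - 1\<bar> \<le> \<bar>N / ipN N w w - 1\<bar>"
    unfolding \<nu>_def using WN by (intro abs_sqrt_minus_one_le) simp
  also have "\<dots> = \<bar>ipN N w w - N\<bar> / ipN N w w"
    using WN \<open>1 \<le> N\<close> by (simp add: field_simps abs_divide abs_minus_commute)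
  also have "\<dots> \<le> (\<rho> * N) / (3 * N / 4)"
    using W WN \<open>0 \<le> \<rho>\<close> \<open>1 \<le> N\<close> unfolding w_def by (intro frac_le) auto
  also have "\<dots> \<le> 2 * \<rho>"
    using \<open>0 \<le> \<rho>\<close> \<open>1 \<le> N\<close> by (simp add: field_simps)
  finally have \<nu>: "\<bar>\<nu> - 1\<bar> \<le> 2 * \<rho>" .
  have wy: "\<bar>w j - y i j\<bar> \<le> \<delta> * U"
  proof -
    have "\<bar>w j - y i j\<bar> \<le> \<delta> * (\<Sum>r\<in>{1..<i}. \<bar>y r j\<bar>)"
      using gs i unfolding gs_near_input_def w_def by blast
    also have "\<dots> \<le> \<delta> * U"
      unfolding U_def using i \<open>0 \<le> \<delta>\<close> by (intro mult_left_mono sum_mono2) auto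
    finally show ?thesis .
  qed
  have wU: "\<bar>w j\<bar> \<le> U"
    using gs i \<open>0 \<le> \<delta>\<close> \<open>\<delta> \<le> 1\<close> unfolding gs_near_input_def w_def U_def
    by (intro abs_le_sum_abs_of_near) auto
  have "sqrt N * gs_gamma N y i j = \<nu> * w j"
    by (simp add: gs_gamma_def \<nu>_def w_def real_sqrt_divide)
  then have "\<bar>sqrt N * gs_gamma N y i j - y i j\<bar> = \<bar>(\<nu> - 1) * w j + (w j - y i j)\<bar>"
    by (simp add: algebra_simps)
  also have "\<dots> \<le> \<bar>\<nu> - 1\<bar> * \<bar>w j\<bar> + \<bar>w j - y i j\<bar>"
    by (metis abs_mult abs_triangle_ineq)
  also have "\<dots> \<le> 2 * \<rho> * U + \<delta> * U"
    using mult_mono[OF \<nu> wU] \<open>0 \<le> \<rho>\<close> wy by simp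
  finally show ?thesis unfolding U_def by (simp add: algebra_simps)
qed

lemma sqrt_N_gs_gamma_near:
  assumes "1 \<le> k" "0 < \<theta>"
  shows "\<exists>\<eta>>0. \<forall>N y. 1 \<le> N \<longrightarrow> gram_near_scaled_id k \<eta> N y \<longrightarrow>
           (\<forall>i\<in>{1..k}. \<forall>j. \<bar>sqrt N * gs_gamma N y i j - y i j\<bar> \<le> \<theta> * (\<Sum>r\<in>{1..k}. \<bar>y r j\<bar>))"
proof -
  define \<zeta> where "\<zeta> = min \<theta> 1"
  have \<zeta>: "0 < \<zeta>" "\<zeta> \<le> \<theta>" "\<zeta> \<le> 1" using \<open>0 < \<theta>\<close> by (auto simp: \<zeta>_def)
  have k: "1 \<le> real k" using \<open>1 \<le> k\<close> by simp
  define \<delta> where "\<delta> = \<zeta> / (48 * (real k)\<^sup>2)"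
  have "0 < \<delta>" using \<zeta> k by (simp add: \<delta>_def)
  have k2\<delta>: "(real k)\<^sup>2 * \<delta> = \<zeta> / 48" using k by (simp add: \<delta>_def)
  have "1 \<le> (real k)\<^sup>2" using k by (rule one_le_power)
  have "real k \<le> (real k)\<^sup>2" using k by (simp add: power2_eq_square mult_le_cancel_left1)
  with \<open>1 \<le> (real k)\<^sup>2\<close> have "\<delta> \<le> (real k)\<^sup>2 * \<delta>" "real k * \<delta> \<le> (real k)\<^sup>2 * \<delta>"
    using mult_right_mono \<open>0 < \<delta>\<close> by fastforce+
  then have "\<delta> \<le> \<zeta> / 48" "real k * \<delta> \<le> \<zeta> / 48" using k2\<delta> by linarith+
  then have "\<delta> \<le> 1" using \<zeta> by simp
  have "(real k)\<^sup>2 * \<delta>\<^sup>2 \<le> \<zeta> / 48"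
    using k2\<delta> \<open>\<delta> \<le> 1\<close> \<open>0 < \<delta>\<close> by (metis mult_left_le power2_eq_square mult.assoc zero_le_power2
        mult_nonneg_nonneg less_imp_le)
  obtain \<eta>\<^sub>1 where "0 < \<eta>\<^sub>1" and gs: "\<forall>N y. 1 \<le> N \<longrightarrow> gram_near_scaled_id k \<eta>\<^sub>1 N y \<longrightarrow> gs_near_input k \<delta> N y"
    using gs_near_input_of_gram_near[OF order_refl \<open>0 < \<delta>\<close>] by blast
  define \<eta> where "\<eta> = min \<eta>\<^sub>1 (\<zeta> / 8)"
  have "0 < \<eta>" "\<eta> \<le> \<eta>\<^sub>1" "\<eta> \<le> \<zeta> / 8" using \<open>0 < \<eta>\<^sub>1\<close> \<zeta> by (auto simp: \<eta>_def)
  define \<rho> where "\<rho> = \<eta> + 4 * real k * \<delta> + 2 * (real k)\<^sup>2 * \<delta>\<^sup>2"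
  have "0 \<le> \<rho>" "\<rho> \<le> \<zeta> / 4" "2 * \<rho> + \<delta> \<le> \<theta>"
    using \<open>0 < \<eta>\<close> \<open>0 < \<delta>\<close> \<open>\<eta> \<le> \<zeta> / 8\<close> \<open>real k * \<delta> \<le> \<zeta> / 48\<close> \<open>\<delta> \<le> \<zeta> / 48\<close>
      \<open>(real k)\<^sup>2 * \<delta>\<^sup>2 \<le> \<zeta> / 48\<close> \<zeta> k
    by (auto simp: \<rho>_def)
  have "\<bar>sqrt N * gs_gamma N y i j - y i j\<bar> \<le> \<theta> * (\<Sum>r\<in>{1..k}. \<bar>y r j\<bar>)"
    if N: "1 \<le> N" and near: "gram_near_scaled_id k \<eta> N y" and i: "i \<in> {1..k}" for N y i j
  proof -
    have "gs_near_input k \<delta> N y"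
      using gs N gram_near_scaled_id_mono[OF near \<open>\<eta> \<le> \<eta>\<^sub>1\<close>] by blast
    moreover have "\<bar>ipN N (gs_w N y i) (gs_w N y i) - N\<bar> \<le> \<rho> * N"
      unfolding \<rho>_def using \<open>\<eta> \<le> \<zeta> / 8\<close> \<zeta> \<open>0 < \<delta>\<close>
      by (intro gs_w_sq_norm_near[OF near _ calculation _ order_refl i]) auto
    ultimately have "\<bar>sqrt N * gs_gamma N y i j - y i j\<bar> \<le> (2 * \<rho> + \<delta>) * (\<Sum>r\<in>{1..k}. \<bar>y r j\<bar>)"
      using \<open>0 < \<delta>\<close> \<open>\<delta> \<le> 1\<close> \<open>0 \<le> \<rho>\<close> \<open>\<rho> \<le> \<zeta> / 4\<close> \<zeta> N i
      by (intro sqrt_N_gs_gamma_bound) auto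
    also have "\<dots> \<le> \<theta> * (\<Sum>r\<in>{1..k}. \<bar>y r j\<bar>)"
      using \<open>2 * \<rho> + \<delta> \<le> \<theta>\<close> by (intro mult_right_mono sum_nonneg) auto
    finally show ?thesis .
  qed
  with \<open>0 < \<eta>\<close> show ?thesis by blast
qed

section \<open>Stability of the minimal column form\<close>

lemma weighted_sq_sum_perturb:
  fixes a z y :: "nat \<Rightarrow> real"
  assumes "1 \<le> k" and a: "\<forall>i\<in>{1..k}. 0 < a i"
    and zy: "\<forall>i\<in>{1..k}. \<bar>z i - y i\<bar> \<le> \<theta> * (\<Sum>r\<in>{1..k}. \<bar>y r\<bar>)" and "0 \<le> \<theta>" "\<theta> \<le> 1"
  shows "\<bar>(\<Sum>i=1..k. a i * (z i)\<^sup>2) - (\<Sum>i=1..k. a i * (y i)\<^sup>2)\<bar>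
     \<le> \<theta> * (3 * real k * (\<Sum>i=1..k. a i) / Min (a ` {1..k})) * (\<Sum>i=1..k. a i * (y i)\<^sup>2)"
proof -
  define U where "U = (\<Sum>r\<in>{1..k}. \<bar>y r\<bar>)"
  define a\<^sub>0 where "a\<^sub>0 = Min (a ` {1..k})"
  define Q where "Q = (\<Sum>i=1..k. a i * (y i)\<^sup>2)"
  have "0 < a\<^sub>0" unfolding a\<^sub>0_def using a \<open>1 \<le> k\<close> by (subst Min_gr_iff) auto
  have "0 \<le> U" unfolding U_def by (rule sum_nonneg) auto
  have CS: "U\<^sup>2 \<le> k * (\<Sum>r\<in>{1..k}. (y r)\<^sup>2)"
    using Cauchy_Schwarz_ineq_sum[of "\<lambda>r. \<bar>y r\<bar>" "\<lambda>_. 1" "{1..k}"] by (simp add: U_def mult.commute)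
  have "a\<^sub>0 * (\<Sum>r\<in>{1..k}. (y r)\<^sup>2) \<le> Q"
    unfolding Q_def a\<^sub>0_def sum_distrib_left by (intro sum_mono mult_right_mono) auto
  then have "(\<Sum>r\<in>{1..k}. (y r)\<^sup>2) \<le> Q / a\<^sub>0"
    using \<open>0 < a\<^sub>0\<close> by (simp add: field_simps)
  then have U2: "U\<^sup>2 \<le> k * (Q / a\<^sub>0)"
    using CS by (meson mult_left_mono of_nat_0_le_iff order_trans)
  have "\<bar>(\<Sum>i=1..k. a i * (z i)\<^sup>2) - Q\<bar> \<le> (\<Sum>i=1..k. \<bar>a i * ((z i)\<^sup>2 - (y i)\<^sup>2)\<bar>)"
    unfolding Q_def sum_subtractf[symmetric] right_diff_distrib by (rule sum_abs)
  also have "\<dots> \<le> (\<Sum>i=1..k. a i * (3 * \<theta> * U\<^sup>2))"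
  proof (rule sum_mono)
    fix i assume i: "i \<in> {1..k}"
    have d: "\<bar>z i - y i\<bar> \<le> \<theta> * U" using zy i by (simp add: U_def)
    have "\<bar>y i\<bar> \<le> U" unfolding U_def using i by (intro member_le_sum) auto
    then have "\<bar>z i + y i\<bar> \<le> 3 * U"
      using d \<open>0 \<le> U\<close> mult_left_le_one_le[of U \<theta>] \<open>0 \<le> \<theta>\<close> \<open>\<theta> \<le> 1\<close> by linarith
    then have "\<bar>z i - y i\<bar> * \<bar>z i + y i\<bar> \<le> (\<theta> * U) * (3 * U)"
      using d by (intro mult_mono) auto
    moreover have "\<bar>(z i)\<^sup>2 - (y i)\<^sup>2\<bar> = \<bar>z i - y i\<bar> * \<bar>z i + y i\<bar>"
      by (simp add: power2_eq_square abs_mult[symmetric] algebra_simps)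
    ultimately show "\<bar>a i * ((z i)\<^sup>2 - (y i)\<^sup>2)\<bar> \<le> a i * (3 * \<theta> * U\<^sup>2)"
      using a i by (simp add: abs_mult mult_left_mono less_imp_le power2_eq_square mult_ac)
  qed
  also have "\<dots> = 3 * \<theta> * (\<Sum>i=1..k. a i) * U\<^sup>2"
    by (simp add: sum_distrib_left sum_distrib_right mult_ac)
  also have "\<dots> \<le> 3 * \<theta> * (\<Sum>i=1..k. a i) * (k * (Q / a\<^sub>0))"
    using U2 a \<open>0 \<le> \<theta>\<close> by (intro mult_left_mono mult_nonneg_nonneg sum_nonneg) (auto simp: less_imp_le)
  also have "\<dots> = \<theta> * (3 * real k * (\<Sum>i=1..k. a i) / a\<^sub>0) * Q"
    by simp
  finally show ?thesis unfolding Q_def a\<^sub>0_def .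
qed

lemma Min_image_rel_perturb:
  fixes Q Q' :: "'a \<Rightarrow> real"
  assumes "finite S" "S \<noteq> {}" and Q: "\<And>j. j \<in> S \<Longrightarrow> \<bar>Q' j - Q j\<bar> \<le> c * Q j" and "c \<le> 1"
  shows "\<bar>Min (Q' ` S) - Min (Q ` S)\<bar> \<le> c * Min (Q ` S)"
proof -
  have "Min (Q ` S) \<in> Q ` S" "Min (Q' ` S) \<in> Q' ` S"
    using assms(1,2) by (intro Min_in; simp)+
  then obtain j\<^sub>0 j\<^sub>1 where j\<^sub>0: "j\<^sub>0 \<in> S" "Q j\<^sub>0 = Min (Q ` S)"
    and j\<^sub>1: "j\<^sub>1 \<in> S" "Q' j\<^sub>1 = Min (Q' ` S)"
    by (metis imageE)
  have "Min (Q' ` S) \<le> Q' j\<^sub>0" using assms(1) j\<^sub>0(1) by simp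
  also have "\<dots> \<le> Q j\<^sub>0 + c * Q j\<^sub>0" using Q[OF j\<^sub>0(1)] by (auto simp: abs_le_iff)
  finally have upper: "Min (Q' ` S) - Min (Q ` S) \<le> c * Min (Q ` S)" using j\<^sub>0(2) by simp
  have "Min (Q ` S) \<le> Q j\<^sub>1" using assms(1) j\<^sub>1(1) by simp
  then have "(1 - c) * Min (Q ` S) \<le> (1 - c) * Q j\<^sub>1" using \<open>c \<le> 1\<close> by (simp add: mult_left_mono)
  also have "\<dots> \<le> Q' j\<^sub>1" using Q[OF j\<^sub>1(1)] by (auto simp: abs_le_iff algebra_simps)
  finally have "Min (Q ` S) - Min (Q' ` S) \<le> c * Min (Q ` S)" using j\<^sub>1(2) by (simp add: algebra_simps)
  with upper show ?thesis by (simp add: abs_le_iff)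
qed

definition min_column_form :: "nat \<Rightarrow> (nat \<Rightarrow> real) \<Rightarrow> nat \<Rightarrow> (nat \<Rightarrow> nat \<Rightarrow> real) \<Rightarrow> real" where
  "min_column_form k a N z = Min ((\<lambda>j. \<Sum>i=1..k. a i * (z i j)\<^sup>2) ` {1..N})"

lemma min_column_form_rel_perturb:
  assumes "1 \<le> k" and a: "\<forall>i\<in>{1..k}. 0 < a i" and "1 \<le> N" "0 \<le> \<theta>" "\<theta> \<le> 1"
    and zy: "\<And>i j. i \<in> {1..k} \<Longrightarrow> \<bar>z i j - y i j\<bar> \<le> \<theta> * (\<Sum>r\<in>{1..k}. \<bar>y r j\<bar>)"
    and "\<theta> * (3 * real k * (\<Sum>i=1..k. a i) / Min (a ` {1..k})) \<le> 1"
  shows "\<bar>min_column_form k a N z - min_column_form k a N y\<bar>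
    \<le> \<theta> * (3 * real k * (\<Sum>i=1..k. a i) / Min (a ` {1..k})) * min_column_form k a N y"
  unfolding min_column_form_def
proof (rule Min_image_rel_perturb)
  fix j assume "j \<in> {1..N}"
  show "\<bar>(\<Sum>i=1..k. a i * (z i j)\<^sup>2) - (\<Sum>i=1..k. a i * (y i j)\<^sup>2)\<bar>
      \<le> \<theta> * (3 * real k * (\<Sum>i=1..k. a i) / Min (a ` {1..k})) * (\<Sum>i=1..k. a i * (y i j)\<^sup>2)"
    using zy by (intro weighted_sq_sum_perturb[OF \<open>1 \<le> k\<close> a _ \<open>0 \<le> \<theta>\<close> \<open>\<theta> \<le> 1\<close>]) auto
qed (use assms in auto)

lemma lemma3p10_stat_eq_min_column_form:
  "lemma3p10_stat k a N \<omega> = real N powr (2 / real k) *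
     (min_column_form k a N (\<lambda>i j. sqrt N * gs_gamma N (yvecs \<omega>) i j) - min_column_form k a N (yvecs \<omega>))"
  by (simp add: lemma3p10_stat_def min_column_form_def)

lemma min_column_form_le_of_small_column:
  assumes "\<forall>i\<in>{1..k}. 0 < a i" "j \<in> {1..N}" "\<forall>i\<in>{1..k}. \<bar>z i j\<bar> \<le> s"
  shows "min_column_form k a N z \<le> (\<Sum>i=1..k. a i) * s\<^sup>2"
proof -
  have "min_column_form k a N z \<le> (\<Sum>i=1..k. a i * (z i j)\<^sup>2)"
    unfolding min_column_form_def using assms(2) by (intro Min_le) auto
  also have "\<dots> \<le> (\<Sum>i=1..k. a i * s\<^sup>2)"
  proof (rule sum_mono)
    fix i assume i: "i \<in> {1..k}"
    have "\<bar>z i j\<bar>\<^sup>2 \<le> s\<^sup>2" using assms(3) i by (intro power_mono) auto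
    then show "a i * (z i j)\<^sup>2 \<le> a i * s\<^sup>2"
      using assms(1) i by (intro mult_left_mono) (auto simp: less_imp_le)
  qed
  finally show ?thesis by (simp add: sum_distrib_right)
qed

lemma min_column_form_gs_gamma_near:
  assumes "1 \<le> k" and a: "\<forall>i\<in>{1..k}. 0 < a i" and "0 < \<epsilon>" "0 < C"
  shows "\<exists>\<eta>>0. \<forall>N y. 1 \<le> N \<longrightarrow> gram_near_scaled_id k \<eta> N y \<longrightarrow>
     real N powr (2 / real k) * min_column_form k a N y \<le> C \<longrightarrow>
     real N powr (2 / real k) *
       \<bar>min_column_form k a N (\<lambda>i j. sqrt N * gs_gamma N y i j) - min_column_form k a N y\<bar> \<le> \<epsilon>"
proof -
  define L where "L = 3 * real k * (\<Sum>i=1..k. a i) / Min (a ` {1..k})"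
  have "0 < Min (a ` {1..k})" using a \<open>1 \<le> k\<close> by (subst Min_gr_iff) auto
  moreover have "0 < (\<Sum>i=1..k. a i)" using a \<open>1 \<le> k\<close> by (intro sum_pos) auto
  ultimately have "0 < L" unfolding L_def using \<open>1 \<le> k\<close> by simp
  define \<theta> where "\<theta> = min 1 (min (1 / L) (\<epsilon> / (L * C)))"
  have "0 < \<theta>" "\<theta> \<le> 1" "\<theta> \<le> 1 / L" "\<theta> \<le> \<epsilon> / (L * C)"
    using \<open>0 < L\<close> \<open>0 < \<epsilon>\<close> \<open>0 < C\<close> by (auto simp: \<theta>_def)
  then have "\<theta> * L \<le> 1" "\<theta> * L * C \<le> \<epsilon>"
    using \<open>0 < L\<close> \<open>0 < C\<close> by (simp_all add: field_simps)
  obtain \<eta> where "0 < \<eta>" and near: "\<forall>N y. 1 \<le> N \<longrightarrow> gram_near_scaled_id k \<eta> N y \<longrightarrow>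
      (\<forall>i\<in>{1..k}. \<forall>j. \<bar>sqrt N * gs_gamma N y i j - y i j\<bar> \<le> \<theta> * (\<Sum>r\<in>{1..k}. \<bar>y r j\<bar>))"
    using sqrt_N_gs_gamma_near[OF \<open>1 \<le> k\<close> \<open>0 < \<theta>\<close>] by blast
  have "real N powr (2 / real k) *
      \<bar>min_column_form k a N (\<lambda>i j. sqrt N * gs_gamma N y i j) - min_column_form k a N y\<bar> \<le> \<epsilon>"
    if "1 \<le> N" "gram_near_scaled_id k \<eta> N y" and C: "real N powr (2 / real k) * min_column_form k a N y \<le> C"
    for N y
  proof -
    have "\<bar>min_column_form k a N (\<lambda>i j. sqrt N * gs_gamma N y i j) - min_column_form k a N y\<bar>
        \<le> \<theta> * L * min_column_form k a N y"
      unfolding L_def using near that(1,2) \<open>0 < \<theta>\<close> \<open>\<theta> * L \<le> 1\<close>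
      by (intro min_column_form_rel_perturb[OF \<open>1 \<le> k\<close> a \<open>1 \<le> N\<close> _ \<open>\<theta> \<le> 1\<close>]) (auto simp: L_def)
    then have "real N powr (2 / real k) *
        \<bar>min_column_form k a N (\<lambda>i j. sqrt N * gs_gamma N y i j) - min_column_form k a N y\<bar>
        \<le> real N powr (2 / real k) * (\<theta> * L * min_column_form k a N y)"
      by (rule mult_left_mono) simp_all
    also have "\<dots> = \<theta> * L * (real N powr (2 / real k) * min_column_form k a N y)"
      by (simp add: mult_ac)
    also have "\<dots> \<le> \<theta> * L * C"
      using C \<open>0 < \<theta>\<close> \<open>0 < L\<close> by (intro mult_left_mono) auto
    finally show ?thesis using \<open>\<theta> * L * C \<le> \<epsilon>\<close> by linarith
  qed
  with \<open>0 < \<eta>\<close> show ?thesis by blast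
qed

section \<open>Gaussian estimates\<close>

lemma has_bochner_integral_PiM_prod:
  fixes h :: "'a \<Rightarrow> real"
  assumes "prob_space M" "finite I" "J \<subseteq> I" "has_bochner_integral M h v"
  shows "has_bochner_integral (PiM I (\<lambda>_. M)) (\<lambda>\<omega>. \<Prod>c\<in>J. h (\<omega> c)) (v ^ card J)"
proof -
  interpret M: prob_space M by fact
  interpret product_sigma_finite "\<lambda>_::'i. M"
    by (simp add: product_sigma_finite_def M.sigma_finite_measure_axioms)
  define g where "g c = (if c \<in> J then h else (\<lambda>_. 1))" for c
  have int: "integrable M (g c)" for c
    using assms(4) by (simp add: g_def has_bochner_integral_iff)
  have "(\<Prod>c\<in>I. g c (\<omega> c)) = (\<Prod>c\<in>J. h (\<omega> c))" for \<omega>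
    using assms(2,3) by (intro prod.mono_neutral_cong_right) (auto simp: g_def)
  moreover have "(\<Prod>c\<in>I. integral\<^sup>L M (g c)) = (\<Prod>c\<in>J. v)"
    using assms(2-4) by (intro prod.mono_neutral_cong_right) (auto simp: g_def has_bochner_integral_iff M.prob_space)
  ultimately show ?thesis
    using product_integrable_prod[of I g, OF assms(2) int] product_integral_prod[of I g, OF assms(2) int]
    by (simp add: has_bochner_integral_iff)
qed

lemma (in prob_space) uncorrelated_sum_deviation:
  fixes Z :: "'j \<Rightarrow> 'a \<Rightarrow> real" and v :: real
  assumes "finite J" "0 < t"
    and meas: "\<And>j. j \<in> J \<Longrightarrow> Z j \<in> borel_measurable M"
    and cov: "\<And>j j'. j \<in> J \<Longrightarrow> j' \<in> J \<Longrightarrow>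
      has_bochner_integral M (\<lambda>\<omega>. Z j \<omega> * Z j' \<omega>) (if j = j' then v else 0)"
  shows "{\<omega>\<in>space M. t \<le> \<bar>\<Sum>j\<in>J. Z j \<omega>\<bar>} \<in> sets M"
    and "measure M {\<omega>\<in>space M. t \<le> \<bar>\<Sum>j\<in>J. Z j \<omega>\<bar>} \<le> card J * v / t\<^sup>2"
proof -
  have Zsum: "(\<lambda>\<omega>. \<Sum>j\<in>J. Z j \<omega>) \<in> borel_measurable M"
    using meas by (intro borel_measurable_sum) auto
  then show "{\<omega>\<in>space M. t \<le> \<bar>\<Sum>j\<in>J. Z j \<omega>\<bar>} \<in> sets M"
    by measurable
  have "(\<Sum>j\<in>J. Z j \<omega>)\<^sup>2 = (\<Sum>j\<in>J. \<Sum>j'\<in>J. Z j \<omega> * Z j' \<omega>)" for \<omega>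
    by (simp add: power2_eq_square sum_product)
  moreover have "has_bochner_integral M (\<lambda>\<omega>. \<Sum>j\<in>J. \<Sum>j'\<in>J. Z j \<omega> * Z j' \<omega>)
      (\<Sum>j\<in>J. \<Sum>j'\<in>J. if j = j' then v else 0)"
    using cov by (intro has_bochner_integral_sum) auto
  ultimately have "has_bochner_integral M (\<lambda>\<omega>. (\<Sum>j\<in>J. Z j \<omega>)\<^sup>2) (card J * v)"
    using \<open>finite J\<close> by simp
  then show "measure M {\<omega>\<in>space M. t \<le> \<bar>\<Sum>j\<in>J. Z j \<omega>\<bar>} \<le> card J * v / t\<^sup>2"
    using second_moment_method[OF Zsum _ \<open>0 < t\<close>] by (simp add: has_bochner_integral_iff)
qed

lemma std_normal_distribution_moments:
  shows "has_bochner_integral std_normal_distribution (\<lambda>x. x) 0"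
    and "has_bochner_integral std_normal_distribution (\<lambda>x. x\<^sup>2) 1"
    and "has_bochner_integral std_normal_distribution (\<lambda>x. x\<^sup>2 - 1) 0"
    and "has_bochner_integral std_normal_distribution (\<lambda>x. (x\<^sup>2 - 1)\<^sup>2) 2"
proof -
  interpret D: real_distribution std_normal_distribution by (rule real_dist_normal_dist)
  have moment: "has_bochner_integral std_normal_distribution (\<lambda>x. x ^ n)
      (integral\<^sup>L std_normal_distribution (\<lambda>x. x ^ n))" for n
    using integrable_std_normal_distribution_moment by (simp add: has_bochner_integral_iff)
  have one: "has_bochner_integral std_normal_distribution (\<lambda>x. 1) (1::real)"
    using moment[of 0] std_normal_distribution_even_moments(1)[of 0] by simp
  show "has_bochner_integral std_normal_distribution (\<lambda>x. x) 0"
    using moment[of 1] integral_std_normal_distribution_moment_odd[of 1] by simp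
  show x2: "has_bochner_integral std_normal_distribution (\<lambda>x. x\<^sup>2) 1"
    using moment[of 2] std_normal_distribution_even_moments(1)[of 1] by simp
  have x4: "has_bochner_integral std_normal_distribution (\<lambda>x. x ^ 4) 3"
    using moment[of 4] std_normal_distribution_even_moments(1)[of 2] by (simp add: fact_numeral)
  show "has_bochner_integral std_normal_distribution (\<lambda>x. x\<^sup>2 - 1) 0"
    using has_bochner_integral_diff[OF x2 one] by simp
  have "(\<lambda>x::real. (x\<^sup>2 - 1)\<^sup>2) = (\<lambda>x. x ^ 4 - 2 * x\<^sup>2 + 1)"
    by (simp add: fun_eq_iff power2_eq_square power4_eq_xxxx algebra_simps)
  then show "has_bochner_integral std_normal_distribution (\<lambda>x. (x\<^sup>2 - 1)\<^sup>2) 2"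
    using has_bochner_integral_add[OF has_bochner_integral_diff[OF x4 has_bochner_integral_mult_right[OF x2, of 2]] one]
    by simp
qed

lemma std_normal_distribution_interval_ge:
  assumes "0 \<le> s" "s \<le> 1"
  shows "2 * s * std_normal_density 1 \<le> measure std_normal_distribution {-s..s}"
proof -
  have int: "integrable lborel (\<lambda>x. std_normal_density x * indicator {-s..s} x :: real)"
    using integrable_mult_indicator[of "{-s..s}" lborel std_normal_density]
      integrable_std_normal_moment[of 0] by (simp add: mult.commute)
  have "2 * s * std_normal_density 1 = (\<integral>x. std_normal_density 1 * indicator {-s..s} x \<partial>lborel)"
    using assms by simp
  also have "\<dots> \<le> (\<integral>x. std_normal_density x * indicator {-s..s} x \<partial>lborel)"
  proof (rule integral_mono[OF _ int])
    show "integrable lborel (\<lambda>x. std_normal_density 1 * indicator {-s..s} x :: real)"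
      using assms by (intro integrable_mult_right integrable_real_indicator) (auto simp: emeasure_lborel_Icc)
    fix x :: real
    have "std_normal_density 1 \<le> std_normal_density x" if "x \<in> {-s..s}"
    proof -
      have "\<bar>x\<bar> \<le> 1" using that assms by auto
      then have "x\<^sup>2 \<le> 1" by (simp add: abs_square_le_1)
      then show ?thesis by (simp add: std_normal_density_def divide_right_mono)
    qed
    then show "std_normal_density 1 * indicator {-s..s} x \<le> std_normal_density x * indicator {-s..s} x"
      by (simp add: indicator_def)
  qed
  also have "\<dots> = (\<integral>x. indicator {-s..s} x \<partial>std_normal_distribution)"
    by (subst integral_density) (auto simp: normal_density_nonneg)
  also have "\<dots> = measure std_normal_distribution {-s..s}"
    by simp
  finally show ?thesis .
qed

lemma prob_space_gauss_space: "prob_space (gauss_space N)"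
  unfolding gauss_space_def by (intro prob_space_PiM prob_space_normal_density) simp

lemma has_bochner_integral_gauss_space_prod:
  fixes h :: "real \<Rightarrow> real"
  assumes "C \<subseteq> {1..N} \<times> {1..N}" "has_bochner_integral std_normal_distribution h v"
  shows "has_bochner_integral (gauss_space N) (\<lambda>\<omega>. \<Prod>c\<in>C. h (\<omega> c)) (v ^ card C)"
  unfolding gauss_space_def
  by (rule has_bochner_integral_PiM_prod[OF _ _ assms]) (simp_all add: prob_space_normal_density)

lemma gram_entry_products_integral:
  assumes "i \<in> {1..N}" "l \<in> {1..N}" "j \<in> {1..N}" "j' \<in> {1..N}"
  defines "Z \<equiv> \<lambda>j \<omega>. \<omega> (i, j) * \<omega> (l, j) - (if i = l then 1 else 0 :: real)"
  shows "has_bochner_integral (gauss_space N) (\<lambda>\<omega>. Z j \<omega> * Z j' \<omega>)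
           (if j = j' then if i = l then 2 else 1 else 0)"
proof -
  consider "i = l" "j = j'" | "i = l" "j \<noteq> j'" | "i \<noteq> l" "j = j'" | "i \<noteq> l" "j \<noteq> j'"
    by blast
  then show ?thesis
  proof cases
    case 1
    have "has_bochner_integral (gauss_space N) (\<lambda>\<omega>. \<Prod>c\<in>{(i, j)}. ((\<omega> c)\<^sup>2 - 1)\<^sup>2) (2 ^ card {(i, j)})"
      using assms(1,3) by (intro has_bochner_integral_gauss_space_prod std_normal_distribution_moments) auto
    then show ?thesis using 1 by (simp add: Z_def power2_eq_square)
  next
    case 2
    have "has_bochner_integral (gauss_space N) (\<lambda>\<omega>. \<Prod>c\<in>{(i, j), (i, j')}. (\<omega> c)\<^sup>2 - 1)
        (0 ^ card {(i, j), (i, j')})"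
      using assms by (intro has_bochner_integral_gauss_space_prod std_normal_distribution_moments) auto
    then show ?thesis using 2 by (simp add: Z_def power2_eq_square)
  next
    case 3
    have "has_bochner_integral (gauss_space N) (\<lambda>\<omega>. \<Prod>c\<in>{(i, j), (l, j)}. (\<omega> c)\<^sup>2)
        (1 ^ card {(i, j), (l, j)})"
      using assms by (intro has_bochner_integral_gauss_space_prod std_normal_distribution_moments) auto
    then show ?thesis using 3 by (simp add: Z_def power2_eq_square mult_ac)
  next
    case 4
    have "has_bochner_integral (gauss_space N) (\<lambda>\<omega>. \<Prod>c\<in>{(i, j), (l, j), (i, j'), (l, j')}. \<omega> c)
        (0 ^ card {(i, j), (l, j), (i, j'), (l, j')})"
      using assms by (intro has_bochner_integral_gauss_space_prod std_normal_distribution_moments) auto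
    then show ?thesis using 4 by (simp add: Z_def mult_ac)
  qed
qed

lemma measure_gram_entry_deviation:
  assumes i: "i \<in> {1..N}" and l: "l \<in> {1..N}" and "0 < \<eta>"
  defines "S \<equiv> {\<omega> \<in> space (gauss_space N).
    \<eta> * N \<le> \<bar>ipN N (yvecs \<omega> i) (yvecs \<omega> l) - (if i = l then real N else 0)\<bar>}"
  shows "S \<in> sets (gauss_space N)" and "measure (gauss_space N) S \<le> 2 / (\<eta>\<^sup>2 * N)"
proof -
  interpret prob_space "gauss_space N" by (rule prob_space_gauss_space)
  define Z where "Z j \<omega> = \<omega> (i, j) * \<omega> (l, j) - (if i = l then 1 else 0 :: real)"
    for j :: nat and \<omega> :: "nat \<times> nat \<Rightarrow> real"
  have S: "S = {\<omega> \<in> space (gauss_space N). \<eta> * N \<le> \<bar>\<Sum>j\<in>{1..N}. Z j \<omega>\<bar>}"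
    by (simp add: S_def Z_def ipN_def yvecs_def sum_subtractf)
  have meas: "Z j \<in> borel_measurable (gauss_space N)" if "j \<in> {1..N}" for j
    unfolding Z_def gauss_space_def using i l that
    by (intro borel_measurable_diff borel_measurable_times borel_measurable_const
        measurable_component_singleton) auto
  have cov: "has_bochner_integral (gauss_space N) (\<lambda>\<omega>. Z j \<omega> * Z j' \<omega>)
      (if j = j' then if i = l then 2 else 1 else 0)" if "j \<in> {1..N}" "j' \<in> {1..N}" for j j'
    using gram_entry_products_integral[OF i l that] by (simp add: Z_def)
  have "0 < \<eta> * N" using \<open>0 < \<eta>\<close> i by simp
  note dev = uncorrelated_sum_deviation[of "{1..N}" "\<eta> * N" Z, OF _ this meas cov, folded S]
  show "S \<in> sets (gauss_space N)" using dev(1) by simp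
  have "measure (gauss_space N) S \<le> N * (if i = l then 2 else 1) / (\<eta> * N)\<^sup>2"
    using dev(2) by (cases "i = l") simp_all
  also have "\<dots> \<le> 2 / (\<eta>\<^sup>2 * N)"
    using \<open>0 < \<eta>\<close> i by (simp add: power2_eq_square field_simps)
  finally show "measure (gauss_space N) S \<le> 2 / (\<eta>\<^sup>2 * N)" .
qed

lemma gram_near_scaled_id_whp:
  fixes \<eta> :: real
  assumes "k \<le> N" "0 < \<eta>"
  obtains F where "F \<in> sets (gauss_space N)" "measure (gauss_space N) F \<le> 2 * (real k)\<^sup>2 / (\<eta>\<^sup>2 * N)"
    "\<And>\<omega>. \<omega> \<in> space (gauss_space N) - F \<Longrightarrow> gram_near_scaled_id k \<eta> N (yvecs \<omega>)"
proof -
  interpret prob_space "gauss_space N" by (rule prob_space_gauss_space)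
  define S where "S i l = {\<omega> \<in> space (gauss_space N).
    \<eta> * N \<le> \<bar>ipN N (yvecs \<omega> i) (yvecs \<omega> l) - (if i = l then real N else 0)\<bar>}" for i l
  define F where "F = (\<Union>(i, l)\<in>{1..k} \<times> {1..k}. S i l)"
  have S: "S i l \<in> sets (gauss_space N)" "measure (gauss_space N) (S i l) \<le> 2 / (\<eta>\<^sup>2 * N)"
    if "(i, l) \<in> {1..k} \<times> {1..k}" for i l
  proof -
    have "i \<in> {1..N}" "l \<in> {1..N}" using that \<open>k \<le> N\<close> by auto
    then show "S i l \<in> sets (gauss_space N)" "measure (gauss_space N) (S i l) \<le> 2 / (\<eta>\<^sup>2 * N)"
      unfolding S_def using measure_gram_entry_deviation \<open>0 < \<eta>\<close> by blast+
  qed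
  have F: "F \<in> sets (gauss_space N)" unfolding F_def by (intro sets.finite_UN) (auto intro: S(1))
  have "measure (gauss_space N) F \<le> (\<Sum>il\<in>{1..k} \<times> {1..k}. measure (gauss_space N) (case_prod S il))"
    unfolding F_def by (rule finite_measure_subadditive_finite) (auto intro: S(1))
  also have "\<dots> \<le> (\<Sum>il\<in>{1..k} \<times> {1..k}. 2 / (\<eta>\<^sup>2 * N))"
    by (intro sum_mono) (clarsimp intro!: S(2))
  also have "\<dots> = 2 * (real k)\<^sup>2 / (\<eta>\<^sup>2 * N)"
    by (simp add: card_cartesian_product power2_eq_square)
  finally have bound: "measure (gauss_space N) F \<le> 2 * (real k)\<^sup>2 / (\<eta>\<^sup>2 * N)" .
  have "gram_near_scaled_id k \<eta> N (yvecs \<omega>)" if \<omega>: "\<omega> \<in> space (gauss_space N) - F" for \<omega>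
    unfolding gram_near_scaled_id_def
  proof (intro ballI)
    fix i l assume "i \<in> {1..k}" "l \<in> {1..k}"
    then have "\<omega> \<notin> S i l" using \<omega> by (auto simp: F_def)
    then show "\<bar>ipN N (yvecs \<omega> i) (yvecs \<omega> l) - (if i = l then real N else 0)\<bar> \<le> \<eta> * N"
      using \<omega> by (auto simp: S_def)
  qed
  with F bound show ?thesis using that by blast
qed

lemma small_column_indicator_integral:
  fixes s :: real
  assumes "k \<le> N" "J \<subseteq> {1..N}"
  defines "q \<equiv> measure std_normal_distribution {-s..s}"
  shows "has_bochner_integral (gauss_space N)
           (\<lambda>\<omega>. \<Prod>j\<in>J. \<Prod>i\<in>{1..k}. indicator {-s..s} (\<omega> (i, j))) ((q ^ k) ^ card J)"
proof -
  interpret D: real_distribution std_normal_distribution by (rule real_dist_normal_dist)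
  have "integrable std_normal_distribution (indicator {-s..s} :: real \<Rightarrow> real)"
    by (rule integrable_real_indicator) (simp_all add: less_top[symmetric])
  then have "has_bochner_integral std_normal_distribution (indicator {-s..s}) q"
    unfolding q_def by (simp add: has_bochner_integral_iff)
  then have "has_bochner_integral (gauss_space N) (\<lambda>\<omega>. \<Prod>c\<in>{1..k} \<times> J. indicator {-s..s} (\<omega> c))
      (q ^ card ({1..k} \<times> J))"
    using assms(1,2) by (intro has_bochner_integral_gauss_space_prod) auto
  moreover have pair: "(\<Prod>c\<in>{1..k} \<times> J. f c) = (\<Prod>j\<in>J. \<Prod>i\<in>{1..k}. f (i, j))"
    for f :: "nat \<times> nat \<Rightarrow> real"
  proof -
    have "(\<Prod>c\<in>{1..k} \<times> J. f c) = (\<Prod>i\<in>{1..k}. \<Prod>j\<in>J. f (i, j))"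
      by (simp add: prod.cartesian_product)
    also have "\<dots> = (\<Prod>j\<in>J. \<Prod>i\<in>{1..k}. f (i, j))"
      by (rule prod.swap)
    finally show ?thesis .
  qed
  ultimately show ?thesis
    using finite_subset[OF assms(2)] unfolding pair by (simp add: card_cartesian_product power_mult)
qed

lemma small_column_indicator_moments:
  fixes s :: real
  assumes "k \<le> N" "j \<in> {1..N}" "j' \<in> {1..N}"
  defines "q \<equiv> measure std_normal_distribution {-s..s}"
    and "Y \<equiv> \<lambda>j \<omega>. \<Prod>i\<in>{1..k}. indicator {-s..s} (\<omega> (i, j)) :: real"
  shows "has_bochner_integral (gauss_space N) (\<lambda>\<omega>. (Y j \<omega> - q ^ k) * (Y j' \<omega> - q ^ k))
           (if j = j' then q ^ k - (q ^ k)\<^sup>2 else 0)"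
proof -
  have Y: "has_bochner_integral (gauss_space N) (Y j) (q ^ k)" if "j \<in> {1..N}" for j
    using small_column_indicator_integral[of k N "{j}" s] that \<open>k \<le> N\<close> by (simp add: Y_def q_def)
  interpret P: prob_space "gauss_space N" by (rule prob_space_gauss_space)
  have one: "has_bochner_integral (gauss_space N) (\<lambda>_. 1) (1::real)"
    by (simp add: has_bochner_integral_iff P.prob_space)
  show ?thesis
  proof (cases "j = j'")
    case True
    have ind_sq: "indicator A x * indicator A x = (indicator A x :: real)" for A and x :: real
      by (simp add: indicator_def)
    have "Y j \<omega> * Y j \<omega> = Y j \<omega>" for \<omega>
      by (simp only: Y_def prod.distrib[symmetric] ind_sq)
    then have eq: "(Y j \<omega> - q ^ k) * (Y j' \<omega> - q ^ k) = (1 - 2 * q ^ k) * Y j \<omega> + (q ^ k)\<^sup>2 * 1" for \<omega>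
      using True by (simp add: algebra_simps power2_eq_square)
    have val: "(1 - 2 * q ^ k) * q ^ k + (q ^ k)\<^sup>2 * 1 = (if j = j' then q ^ k - (q ^ k)\<^sup>2 else 0)"
      using True by (simp add: algebra_simps power2_eq_square)
    have "has_bochner_integral (gauss_space N) (\<lambda>\<omega>. (1 - 2 * q ^ k) * Y j \<omega> + (q ^ k)\<^sup>2 * 1)
        ((1 - 2 * q ^ k) * q ^ k + (q ^ k)\<^sup>2 * 1)"
      using Y[OF assms(2)] one by (intro has_bochner_integral_add has_bochner_integral_mult_right)
    then show ?thesis unfolding eq[symmetric] val .
  next
    case False
    have YY: "has_bochner_integral (gauss_space N) (\<lambda>\<omega>. Y j \<omega> * Y j' \<omega>) (q ^ k * q ^ k)"
      using small_column_indicator_integral[of k N "{j, j'}" s] assms(1-3) False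
      by (simp add: Y_def q_def)
    have eq: "(Y j \<omega> - q ^ k) * (Y j' \<omega> - q ^ k)
        = Y j \<omega> * Y j' \<omega> - q ^ k * Y j \<omega> - q ^ k * Y j' \<omega> + (q ^ k)\<^sup>2 * 1" for \<omega>
      by (simp add: algebra_simps power2_eq_square)
    have val: "q ^ k * q ^ k - q ^ k * q ^ k - q ^ k * q ^ k + (q ^ k)\<^sup>2 * 1
        = (if j = j' then q ^ k - (q ^ k)\<^sup>2 else 0)"
      using False by (simp add: power2_eq_square)
    have "has_bochner_integral (gauss_space N)
        (\<lambda>\<omega>. Y j \<omega> * Y j' \<omega> - q ^ k * Y j \<omega> - q ^ k * Y j' \<omega> + (q ^ k)\<^sup>2 * 1)
        (q ^ k * q ^ k - q ^ k * q ^ k - q ^ k * q ^ k + (q ^ k)\<^sup>2 * 1)"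
      using YY Y[OF assms(2)] Y[OF assms(3)] one
      by (intro has_bochner_integral_add has_bochner_integral_diff has_bochner_integral_mult_right)
    then show ?thesis unfolding eq[symmetric] val .
  qed
qed

lemma no_small_column_whp:
  fixes s :: real
  assumes "k \<le> N" "1 \<le> N"
  defines "q \<equiv> measure std_normal_distribution {-s..s}"
  assumes "0 < q"
  obtains E where "E \<in> sets (gauss_space N)" "measure (gauss_space N) E \<le> 1 / (N * q ^ k)"
    "\<And>\<omega>. \<omega> \<in> space (gauss_space N) - E \<Longrightarrow> \<exists>j\<in>{1..N}. \<forall>i\<in>{1..k}. \<bar>\<omega> (i, j)\<bar> \<le> s"
proof -
  interpret prob_space "gauss_space N" by (rule prob_space_gauss_space)
  define Y where "Y j \<omega> = (\<Prod>i\<in>{1..k}. indicator {-s..s} (\<omega> (i, j)) :: real)"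
    for j :: nat and \<omega> :: "nat \<times> nat \<Rightarrow> real"
  define Z where "Z j \<omega> = Y j \<omega> - q ^ k" for j \<omega>
  define E where "E = {\<omega> \<in> space (gauss_space N). N * q ^ k \<le> \<bar>\<Sum>j\<in>{1..N}. Z j \<omega>\<bar>}"
  have "0 < N * q ^ k" using \<open>0 < q\<close> \<open>1 \<le> N\<close> by simp
  moreover have "Z j \<in> borel_measurable (gauss_space N)" if "j \<in> {1..N}" for j
    unfolding Z_def Y_def gauss_space_def by measurable (use that \<open>k \<le> N\<close> in auto)
  moreover have "has_bochner_integral (gauss_space N) (\<lambda>\<omega>. Z j \<omega> * Z j' \<omega>)
      (if j = j' then q ^ k - (q ^ k)\<^sup>2 else 0)" if "j \<in> {1..N}" "j' \<in> {1..N}" for j j'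
    unfolding Z_def Y_def q_def by (rule small_column_indicator_moments[OF \<open>k \<le> N\<close> that])
  ultimately have E: "E \<in> sets (gauss_space N)"
      "measure (gauss_space N) E \<le> N * (q ^ k - (q ^ k)\<^sup>2) / (N * q ^ k)\<^sup>2"
    unfolding E_def using uncorrelated_sum_deviation[of "{1..N}" "N * q ^ k" Z] by auto
  have "N * (q ^ k - (q ^ k)\<^sup>2) / (N * q ^ k)\<^sup>2 \<le> N * q ^ k / (N * q ^ k)\<^sup>2"
    using \<open>0 < q\<close> by (intro divide_right_mono mult_left_mono) auto
  also have "\<dots> = 1 / (N * q ^ k)"
    using \<open>0 < N * q ^ k\<close> by (simp add: power2_eq_square)
  finally have "measure (gauss_space N) E \<le> 1 / (N * q ^ k)" using E(2) by linarith
  moreover have "\<exists>j\<in>{1..N}. \<forall>i\<in>{1..k}. \<bar>\<omega> (i, j)\<bar> \<le> s" if "\<omega> \<in> space (gauss_space N) - E" for \<omega>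
  proof -
    have "\<bar>\<Sum>j\<in>{1..N}. Y j \<omega> - q ^ k\<bar> < N * q ^ k"
      using that by (auto simp: E_def Z_def not_le)
    then have "0 < (\<Sum>j\<in>{1..N}. Y j \<omega>)"
      by (simp add: sum_subtractf)
    then obtain j where j: "j \<in> {1..N}" and "Y j \<omega> \<noteq> 0"
      by (metis (no_types, lifting) less_irrefl sum.neutral)
    then have "\<forall>i\<in>{1..k}. \<bar>\<omega> (i, j)\<bar> \<le> s"
      by (auto simp: Y_def indicator_def abs_le_iff split: if_splits)
    with j show ?thesis by blast
  qed
  ultimately show ?thesis using E(1) that by blast
qed

lemma powr_inverse_root_scaling:
  fixes N \<tau> :: real
  assumes "1 \<le> k" "0 < \<tau>" "\<tau> ^ k \<le> N"
  defines "s \<equiv> \<tau> / N powr (1 / k)"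
  shows "0 < s" "s \<le> 1" "s ^ k = \<tau> ^ k / N" "N powr (2 / k) * s\<^sup>2 = \<tau>\<^sup>2"
proof -
  have "0 < N" using assms(2,3) zero_less_power[of \<tau> k] by linarith
  have root: "(N powr (1 / k)) ^ k = N"
    using \<open>0 < N\<close> \<open>1 \<le> k\<close> by (simp add: powr_power)
  show "0 < s" unfolding s_def using \<open>0 < N\<close> \<open>0 < \<tau>\<close> by simp
  show "s ^ k = \<tau> ^ k / N" unfolding s_def by (simp add: power_divide root)
  have "(N powr (1 / k))\<^sup>2 = N powr (2 / k)"
    using \<open>0 < N\<close> by (simp add: powr_power)
  then show "N powr (2 / k) * s\<^sup>2 = \<tau>\<^sup>2"
    unfolding s_def using \<open>0 < N\<close> by (simp add: power_divide)
  have "\<tau> = (\<tau> ^ k) powr (1 / k)"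
    using \<open>0 < \<tau>\<close> \<open>1 \<le> k\<close> by (simp add: powr_realpow[symmetric] powr_powr)
  also have "\<dots> \<le> N powr (1 / k)"
    using \<open>\<tau> ^ k \<le> N\<close> \<open>0 < \<tau>\<close> by (intro powr_mono2) auto
  finally show "s \<le> 1" unfolding s_def using \<open>0 < N\<close> by simp
qed

definition holds_outside_small_event :: "'a measure \<Rightarrow> real \<Rightarrow> ('a \<Rightarrow> bool) \<Rightarrow> bool" where
  "holds_outside_small_event M e P \<longleftrightarrow> (\<exists>E\<in>sets M. measure M E < e \<and> (\<forall>\<omega>\<in>space M - E. P \<omega>))"

lemma holds_outside_small_event_conj:
  assumes "holds_outside_small_event M e P" "holds_outside_small_event M e' Q"
  shows "holds_outside_small_event M (e + e') (\<lambda>\<omega>. P \<omega> \<and> Q \<omega>)"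
proof -
  obtain E F where "E \<in> sets M" "measure M E < e" "\<forall>\<omega>\<in>space M - E. P \<omega>"
    and "F \<in> sets M" "measure M F < e'" "\<forall>\<omega>\<in>space M - F. Q \<omega>"
    using assms unfolding holds_outside_small_event_def by blast
  moreover have "measure M (E \<union> F) \<le> measure M E + measure M F"
    using \<open>E \<in> sets M\<close> \<open>F \<in> sets M\<close> by (rule measure_Un_le)
  ultimately show ?thesis
    unfolding holds_outside_small_event_def by (intro bexI[of _ "E \<union> F"]) auto
qed

lemma holds_outside_small_event_mono:
  "holds_outside_small_event M e P \<Longrightarrow> (\<And>\<omega>. \<omega> \<in> space M \<Longrightarrow> P \<omega> \<Longrightarrow> Q \<omega>) \<Longrightarrow>
    holds_outside_small_event M e Q"
  unfolding holds_outside_small_event_def by blast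

lemma (in finite_measure) measure_violation_less:
  assumes "holds_outside_small_event M e P"
  shows "measure M {\<omega> \<in> space M. \<not> P \<omega>} < e"
proof -
  obtain E where "E \<in> sets M" "measure M E < e" "\<forall>\<omega>\<in>space M - E. P \<omega>"
    using assms unfolding holds_outside_small_event_def by blast
  moreover from this have "measure M {\<omega> \<in> space M. \<not> P \<omega>} \<le> measure M E"
    by (intro finite_measure_mono) auto
  ultimately show ?thesis by linarith
qed

lemma gram_near_scaled_id_eventually_whp:
  fixes \<eta> :: real
  assumes "0 < \<eta>" "0 < e"
  shows "\<forall>\<^sub>F N in sequentially.
           holds_outside_small_event (gauss_space N) e (\<lambda>\<omega>. gram_near_scaled_id k \<eta> N (yvecs \<omega>))"
proof -
  have "(\<lambda>N. (2 * (real k)\<^sup>2 / \<eta>\<^sup>2) / real N) \<longlonglongrightarrow> 0"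
    by (rule lim_const_over_n)
  then have "\<forall>\<^sub>F N in sequentially. 2 * (real k)\<^sup>2 / (\<eta>\<^sup>2 * N) < e"
    using order_tendstoD(2)[OF _ \<open>0 < e\<close>] by (simp add: divide_divide_eq_left)
  with eventually_ge_at_top[of k] show ?thesis
  proof eventually_elim
    case (elim N)
    obtain F where "F \<in> sets (gauss_space N)" "measure (gauss_space N) F \<le> 2 * (real k)\<^sup>2 / (\<eta>\<^sup>2 * N)"
      "\<And>\<omega>. \<omega> \<in> space (gauss_space N) - F \<Longrightarrow> gram_near_scaled_id k \<eta> N (yvecs \<omega>)"
      using gram_near_scaled_id_whp[OF \<open>k \<le> N\<close> \<open>0 < \<eta>\<close>] by blast
    with elim(2) show ?case
      unfolding holds_outside_small_event_def by (intro bexI[of _ F]) auto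
  qed
qed

lemma small_column_whp:
  fixes e :: real
  defines "\<tau> \<equiv> (1 + 1 / e) / (2 * std_normal_density 1)"
  assumes "1 \<le> k" "k \<le> N" "0 < e" "\<tau> ^ k \<le> N"
  shows "holds_outside_small_event (gauss_space N) e
           (\<lambda>\<omega>. \<exists>j\<in>{1..N}. \<forall>i\<in>{1..k}. \<bar>\<omega> (i, j)\<bar> \<le> \<tau> / N powr (1 / k))"
proof -
  define c where "c = std_normal_density 1"
  have "0 < c" by (simp add: c_def normal_density_pos)
  then have "0 < \<tau>" "2 * \<tau> * c = 1 + 1 / e"
    using \<open>0 < e\<close> by (simp_all add: \<tau>_def c_def add_pos_pos)
  have "1 \<le> N" using \<open>1 \<le> k\<close> \<open>k \<le> N\<close> by simp
  define s where "s = \<tau> / real N powr (1 / k)"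
  have s: "0 < s" "s \<le> 1" "s ^ k = \<tau> ^ k / N"
    using powr_inverse_root_scaling[of k \<tau> "real N"] assms(2,5) \<open>0 < \<tau>\<close> unfolding s_def by auto
  define q where "q = measure std_normal_distribution {-s..s}"
  have "2 * s * c \<le> q" unfolding q_def c_def using s by (intro std_normal_distribution_interval_ge) auto
  moreover have "0 < 2 * s * c" using s \<open>0 < c\<close> by simp
  ultimately have "0 < q" by linarith
  \<comment> \<open>the expected number N q^k of columns inside the cube [-s, s]^k is at least (2 tau c)^k\<close>
  have "1 + 1 / e = (2 * \<tau> * c) ^ 1" using \<open>2 * \<tau> * c = 1 + 1 / e\<close> by simp
  also have "\<dots> \<le> (2 * \<tau> * c) ^ k"
    using \<open>2 * \<tau> * c = 1 + 1 / e\<close> \<open>0 < e\<close> \<open>1 \<le> k\<close> by (intro power_increasing) auto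
  also have "\<dots> = N * (2 * s * c) ^ k"
    using s(3) \<open>1 \<le> N\<close> by (simp add: power_mult_distrib)
  also have "\<dots> \<le> N * q ^ k"
    using \<open>2 * s * c \<le> q\<close> \<open>0 < 2 * s * c\<close> by (intro mult_left_mono power_mono) auto
  finally have "1 + 1 / e \<le> N * q ^ k" .
  moreover have "0 < 1 + 1 / e" using \<open>0 < e\<close> by (simp add: add_pos_pos)
  ultimately have "1 / (N * q ^ k) \<le> 1 / (1 + 1 / e)"
    by (intro divide_left_mono mult_pos_pos) (use \<open>1 \<le> N\<close> \<open>0 < q\<close> in auto)
  also have "\<dots> < e" using \<open>0 < e\<close> by (simp add: field_simps)
  finally have "1 / (N * q ^ k) < e" .
  moreover obtain E where "E \<in> sets (gauss_space N)" "measure (gauss_space N) E \<le> 1 / (N * q ^ k)"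
    "\<And>\<omega>. \<omega> \<in> space (gauss_space N) - E \<Longrightarrow> \<exists>j\<in>{1..N}. \<forall>i\<in>{1..k}. \<bar>\<omega> (i, j)\<bar> \<le> s"
    using no_small_column_whp[OF \<open>k \<le> N\<close> \<open>1 \<le> N\<close>, of s] \<open>0 < q\<close> unfolding q_def by blast
  ultimately show ?thesis
    unfolding holds_outside_small_event_def s_def by (intro bexI[of _ E]) auto
qed

lemma min_column_form_bounded_whp:
  assumes "1 \<le> k" and a: "\<forall>i\<in>{1..k}. 0 < a i" and "0 < e"
  obtains C where "0 < C"
    "\<forall>\<^sub>F N in sequentially. holds_outside_small_event (gauss_space N) e
       (\<lambda>\<omega>. real N powr (2 / real k) * min_column_form k a N (yvecs \<omega>) \<le> C)"
proof -
  define \<tau> where "\<tau> = (1 + 1 / e) / (2 * std_normal_density 1)"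
  have "0 < \<tau>" using \<open>0 < e\<close> by (simp add: \<tau>_def normal_density_pos add_pos_pos)
  define C where "C = (\<Sum>i=1..k. a i) * \<tau>\<^sup>2 + 1"
  have "0 \<le> (\<Sum>i=1..k. a i)" using a by (intro sum_nonneg) (auto simp: less_imp_le)
  then have "0 < C" by (simp add: C_def add_nonneg_pos)
  have "\<forall>\<^sub>F N in sequentially. k \<le> N \<and> \<tau> ^ k \<le> N"
  proof (intro eventually_conj eventually_ge_at_top eventually_sequentiallyI)
    fix N assume "nat \<lceil>\<tau> ^ k\<rceil> \<le> N"
    then show "\<tau> ^ k \<le> real N" by linarith
  qed
  then have "\<forall>\<^sub>F N in sequentially. holds_outside_small_event (gauss_space N) e
      (\<lambda>\<omega>. real N powr (2 / real k) * min_column_form k a N (yvecs \<omega>) \<le> C)"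
  proof eventually_elim
    case (elim N)
    then have "k \<le> N" "\<tau> ^ k \<le> N" by auto
    have scale: "real N powr (2 / real k) * (\<tau> / N powr (1 / k))\<^sup>2 = \<tau>\<^sup>2"
      using powr_inverse_root_scaling[of k \<tau> "real N"] elim \<open>1 \<le> k\<close> \<open>0 < \<tau>\<close> by simp
    have bound: "real N powr (2 / real k) * min_column_form k a N (yvecs \<omega>) \<le> C"
      if "\<exists>j\<in>{1..N}. \<forall>i\<in>{1..k}. \<bar>yvecs \<omega> i j\<bar> \<le> \<tau> / N powr (1 / k)" for \<omega>
    proof -
      from that obtain j where "j \<in> {1..N}" "\<forall>i\<in>{1..k}. \<bar>yvecs \<omega> i j\<bar> \<le> \<tau> / N powr (1 / k)"
        by blast
      then have "min_column_form k a N (yvecs \<omega>) \<le> (\<Sum>i=1..k. a i) * (\<tau> / N powr (1 / k))\<^sup>2"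
        by (rule min_column_form_le_of_small_column[OF a])
      then have "real N powr (2 / real k) * min_column_form k a N (yvecs \<omega>)
          \<le> real N powr (2 / real k) * ((\<Sum>i=1..k. a i) * (\<tau> / N powr (1 / k))\<^sup>2)"
        by (rule mult_left_mono) simp
      also have "\<dots> = (\<Sum>i=1..k. a i) * \<tau>\<^sup>2"
        by (subst mult.left_commute) (simp only: scale)
      finally show ?thesis by (simp add: C_def)
    qed
    have "holds_outside_small_event (gauss_space N) e
        (\<lambda>\<omega>. \<exists>j\<in>{1..N}. \<forall>i\<in>{1..k}. \<bar>yvecs \<omega> i j\<bar> \<le> \<tau> / N powr (1 / k))"
      using small_column_whp[OF \<open>1 \<le> k\<close> \<open>k \<le> N\<close> \<open>0 < e\<close>] \<open>\<tau> ^ k \<le> N\<close>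
      unfolding yvecs_def \<tau>_def by blast
    then show ?case using bound by (rule holds_outside_small_event_mono)
  qed
  with \<open>0 < C\<close> show ?thesis by (rule that)
qed

theorem lemma3p10:
  fixes k :: nat and a :: "nat \<Rightarrow> real"
  assumes "k \<ge> 1"
    and "\<forall>i\<in>{1..k}. a i > 0"
  shows "\<forall>\<epsilon>>0. (\<lambda>N. measure (gauss_space N)
            {\<omega> \<in> space (gauss_space N). \<bar>lemma3p10_stat k a N \<omega>\<bar> > \<epsilon>}) \<longlonglongrightarrow> 0"
proof (intro allI impI order_tendstoI)
  fix \<epsilon> e :: real assume "0 < \<epsilon>" "0 < e"
  then have "0 < e / 2" by simp
  obtain C where "0 < C" and bounded: "\<forall>\<^sub>F N in sequentially. holds_outside_small_event (gauss_space N) (e / 2)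
      (\<lambda>\<omega>. real N powr (2 / real k) * min_column_form k a N (yvecs \<omega>) \<le> C)"
    using min_column_form_bounded_whp[OF assms \<open>0 < e / 2\<close>] by blast
  obtain \<eta> where "0 < \<eta>" and near: "\<forall>N y. 1 \<le> N \<longrightarrow> gram_near_scaled_id k \<eta> N y \<longrightarrow>
      real N powr (2 / real k) * min_column_form k a N y \<le> C \<longrightarrow>
      real N powr (2 / real k) *
        \<bar>min_column_form k a N (\<lambda>i j. sqrt N * gs_gamma N y i j) - min_column_form k a N y\<bar> \<le> \<epsilon>"
    using min_column_form_gs_gamma_near[OF assms \<open>0 < \<epsilon>\<close> \<open>0 < C\<close>] by blast
  show "\<forall>\<^sub>F N in sequentially. measure (gauss_space N)
      {\<omega> \<in> space (gauss_space N). \<bar>lemma3p10_stat k a N \<omega>\<bar> > \<epsilon>} < e"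
    using bounded gram_near_scaled_id_eventually_whp[where k = k, OF \<open>0 < \<eta>\<close> \<open>0 < e / 2\<close>]
      eventually_ge_at_top[of 1]
  proof eventually_elim
    case (elim N)
    have "holds_outside_small_event (gauss_space N) e (\<lambda>\<omega>. \<bar>lemma3p10_stat k a N \<omega>\<bar> \<le> \<epsilon>)"
      using holds_outside_small_event_conj[OF elim(1,2)] near elim(3)
      by (auto simp: lemma3p10_stat_eq_min_column_form abs_mult intro: holds_outside_small_event_mono)
    then have "measure (gauss_space N) {\<omega> \<in> space (gauss_space N). \<not> \<bar>lemma3p10_stat k a N \<omega>\<bar> \<le> \<epsilon>} < e"
      by (rule finite_measure.measure_violation_less[OF prob_space.finite_measure[OF prob_space_gauss_space]])
    then show ?case by (simp add: not_le)
  qed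
qed (auto intro!: always_eventually less_le_trans[OF _ measure_nonneg])

end
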